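(* Let $f(x)=\frac1n\sum_{i=1}^n f_i(x)$ on $\mathbb{R}^d$ with each $f_i$ convex and $L$-smooth, and let $x_0$ satisfy $\|x_0-x^\star\|\le R_0$ for some minimizer $x^\star$ of $f$. Run the following algorithm (Acc-SVRG-G) with $p_k\equiv\frac1n$ and $\tau_k\equiv1-\frac{1}{\sqrt{n+1}}$: set $z_0=\tilde x_0=x_0$, $\alpha_k=\frac{L\tau_k}{1-\tau_k}$, and for $k=0,1,\dots$: $y_k=\tau_kz_k+(1-\tau_k)(\tilde x_k-\frac1L\nabla f(\tilde x_k))$; $z_{k+1}=\arg\min_x\{\langle\mathcal G_k,x\rangle+\frac{\alpha_k}2\|x-z_k\|^2\}$ with $\mathcal G_k=\nabla f_{i_k}(y_k)-\nabla f_{i_k}(\tilde x_k)+\nabla f(\tilde x_k)$ and $i_k$ uniform on $\{1,\dots,n\}$; $\tilde x_{k+1}=y_k$ with probability $p_k$, else $\tilde x_{k+1}=\tilde x_k$. Let $N$ be the first iteration at which $\tilde x_{N+1}=y_N$ is chosen, and terminate at iteration $N$. Then $$\mathbb E\|\nabla f(\tilde x_{N+1})\|^2\le\frac{8L^2R_0^2}{5(\sqrt{n+1}+1)}\quad\text{and}\quad\mathbb E[f(\tilde x_{N+1})]-f(x^\star)\le\frac{LR_0^2}{\sqrt{n+1}+1}.$$ In particular, if $\epsilon_g^2\ge\frac{8L^2R_0^2}{5(\sqrt{n+1}+1)}$ and $\epsilon_f\ge\frac{LR_0^2}{\sqrt{n+1}+1}$, the algorithm achieves these accuracies with an $O(n)$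 expected oracle complexity.
   Context: $L$-smooth means $L$-Lipschitz gradient. Oracle complexity is the expected number of component gradient evaluations $\nabla f_i$; a full gradient costs $n$ evaluations. *)

theory Defs
  imports "HOL-Probability.Probability"
begin

definition favg :: "nat \<Rightarrow> (nat \<Rightarrow> 'a \<Rightarrow> real) \<Rightarrow> 'a \<Rightarrow> real" where
  "favg n f x = (1 / real n) * (\<Sum>i<n. f i x)"

definition grad_avg :: "nat \<Rightarrow> (nat \<Rightarrow> 'a \<Rightarrow> 'a) \<Rightarrow> 'a \<Rightarrow> 'a::real_vector" where
  "grad_avg n g x = (1 / real n) *\<^sub>R (\<Sum>i<n. g i x)"

definition svrg_y :: "nat \<Rightarrow> real \<Rightarrow> (nat \<Rightarrow> 'a \<Rightarrow> 'a) \<Rightarrow> real \<Rightarrow> 'a \<Rightarrow> 'a \<Rightarrow> 'a::real_vector" where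
  "svrg_y n L g \<tau> z xt = \<tau> *\<^sub>R z + (1 - \<tau>) *\<^sub>R (xt - (1 / L) *\<^sub>R grad_avg n g xt)"

text \<open>State (z_k, xt_k) of Acc-SVRG-G with constant tau, driven by the random sequence
  omega k = (i_k, b_k): sampled component i_k and the coin b_k (true: xt_{k+1} = y_k).\<close>

primrec svrg_state :: "nat \<Rightarrow> real \<Rightarrow> (nat \<Rightarrow> 'a \<Rightarrow> 'a) \<Rightarrow> real \<Rightarrow> 'a \<Rightarrow>
    (nat \<Rightarrow> nat \<times> bool) \<Rightarrow> nat \<Rightarrow> 'a \<times> 'a::real_inner" where
  "svrg_state n L g \<tau> x0 \<omega> 0 = (x0, x0)"
| "svrg_state n L g \<tau> x0 \<omega> (Suc k) =
     (let (z, xt) = svrg_state n L g \<tau> x0 \<omega> k;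
          y = svrg_y n L g \<tau> z xt;
          i = fst (\<omega> k);
          G = g i y - g i xt + grad_avg n g xt;
          \<alpha> = L * \<tau> / (1 - \<tau>)
      in ((ARG_MIN (\<lambda>x. G \<bullet> x + \<alpha> / 2 * (norm (x - z))\<^sup>2) x. True),
          (if snd (\<omega> k) then y else xt)))"

definition svrg_N :: "(nat \<Rightarrow> nat \<times> bool) \<Rightarrow> nat" where
  "svrg_N \<omega> = (LEAST k. snd (\<omega> k))"

text \<open>Output xt_{N+1} = y_N.\<close>

definition svrg_output :: "nat \<Rightarrow> real \<Rightarrow> (nat \<Rightarrow> 'a \<Rightarrow> 'a) \<Rightarrow> real \<Rightarrow> 'a \<Rightarrow>
    (nat \<Rightarrow> nat \<times> bool) \<Rightarrow> 'a::real_inner" where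
  "svrg_output n L g \<tau> x0 \<omega> =
     (let (z, xt) = svrg_state n L g \<tau> x0 \<omega> (svrg_N \<omega>) in svrg_y n L g \<tau> z xt)"

definition svrg_space :: "nat \<Rightarrow> (nat \<Rightarrow> nat \<times> bool) measure" where
  "svrg_space n = (\<Pi>\<^sub>M k\<in>UNIV. measure_pmf (pair_pmf (pmf_of_set {..<n}) (bernoulli_pmf (1 / real n))))"

end

theory Submission
  imports Defs
begin

(* Until the first successful coin the reference point stays x0, so the iterates z_k form a
   Markov chain driven by the sampled indices, and the output is y_N for the first success N,
   a geometric time of mean n. Cocoercivity of the components bounds the second moment of the
   variance-reduced estimator, which yields the one-step estimate
     (F y - F xstar) / tau + |grad F y|^2 / (2L) + E_i alpha/2 |z' - xstar|^2
       <= alpha/2 |z - xstar|^2 + (1 - tau)/tau (F x0 - F xstar).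
   So V z = (1 - tau)/tau (F x0 - F xstar) + alpha/(2n) |z - xstar|^2 is excessive for the chain
   stopped with probability 1/n at every step, and optional stopping bounds the expectation of
   the left-hand side at y_N by V x0 <= L sqrt (n + 1) R0^2 / n. Both accuracy bounds follow,
   the gradient one via |grad F|^2 <= 2L (F - F xstar). The oracle count is n + 2 (N + 1),
   and E (N + 1) = n. *)

section \<open>Smooth convex functions\<close>

lemma has_real_derivative_along_line:
  fixes F :: "'a::real_inner \<Rightarrow> real"
  assumes "\<And>x. (F has_derivative (\<lambda>h. G x \<bullet> h)) (at x)"
  shows "((\<lambda>t. F (x + t *\<^sub>R d)) has_real_derivative G (x + t *\<^sub>R d) \<bullet> d) (at t)"
proof -
  have "((\<lambda>t. x + t *\<^sub>R d) has_derivative (\<lambda>s. s *\<^sub>R d)) (at t)"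
    by (auto intro!: derivative_eq_intros)
  from has_derivative_compose[OF this assms]
  show ?thesis
    by (simp add: has_field_derivative_def mult_commute_abs)
qed

lemma convex_on_gradient_inequality:
  fixes F :: "'a::real_inner \<Rightarrow> real"
  assumes cvx: "convex_on UNIV F" and der: "\<And>x. (F has_derivative (\<lambda>h. G x \<bullet> h)) (at x)"
  shows "F x + G x \<bullet> (y - x) \<le> F y"
proof -
  let ?h = "\<lambda>t. F (x + t *\<^sub>R (y - x))"
  have "convex_on UNIV ?h"
  proof (rule convex_onI)
    fix t a b :: real assume "0 < t" "t < 1"
    have "x + ((1 - t) * a + t * b) *\<^sub>R (y - x)
        = (1 - t) *\<^sub>R (x + a *\<^sub>R (y - x)) + t *\<^sub>R (x + b *\<^sub>R (y - x))"
      by (simp add: algebra_simps)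
    then show "?h ((1 - t) *\<^sub>R a + t *\<^sub>R b) \<le> (1 - t) * ?h a + t * ?h b"
      using convex_onD[OF cvx, of t] \<open>0 < t\<close> \<open>t < 1\<close> by simp
  qed simp
  moreover have "(?h has_real_derivative G x \<bullet> (y - x)) (at 0 within UNIV)"
    using has_real_derivative_along_line[OF der, of x "y - x" 0] by simp
  ultimately have "G x \<bullet> (y - x) * (1 - 0) \<le> ?h 1 - ?h 0"
    by (intro convex_on_imp_above_tangent) auto
  then show ?thesis by simp
qed

lemma descent_lemma:
  fixes F :: "'a::real_inner \<Rightarrow> real"
  assumes der: "\<And>x. (F has_derivative (\<lambda>h. G x \<bullet> h)) (at x)"
    and lip: "\<And>x y. norm (G x - G y) \<le> L * norm (x - y)"
  shows "F y \<le> F x + G x \<bullet> (y - x) + L / 2 * (norm (y - x))\<^sup>2"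
proof -
  define d where "d = y - x"
  define k where "k t = F (x + t *\<^sub>R d) - t * (G x \<bullet> d) - L / 2 * t\<^sup>2 * (norm d)\<^sup>2" for t
  have "k 1 \<le> k 0"
  proof (rule DERIV_nonpos_imp_nonincreasing[where f = k])
    fix t :: real assume t: "0 \<le> t" "t \<le> 1"
    have "(k has_real_derivative (G (x + t *\<^sub>R d) - G x) \<bullet> d - L * t * (norm d)\<^sup>2) (at t)"
      unfolding k_def
      by (rule has_real_derivative_along_line[OF der] derivative_eq_intros refl
          | simp add: inner_diff_left)+
    moreover have "(G (x + t *\<^sub>R d) - G x) \<bullet> d \<le> L * t * (norm d)\<^sup>2"
    proof -
      have "(G (x + t *\<^sub>R d) - G x) \<bullet> d \<le> norm (G (x + t *\<^sub>R d) - G x) * norm d"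
        by (rule norm_cauchy_schwarz)
      also have "\<dots> \<le> L * norm (t *\<^sub>R d) * norm d"
        using lip[of "x + t *\<^sub>R d" x] by (intro mult_right_mono) auto
      finally show ?thesis using t by (simp add: power2_eq_square mult.assoc)
    qed
    ultimately show "\<exists>D. (k has_real_derivative D) (at t) \<and> D \<le> 0" by auto
  qed simp
  then show ?thesis by (simp add: k_def d_def algebra_simps)
qed

lemma norm_step_square:
  fixes e G :: "'a::real_inner"
  assumes "\<alpha> > 0"
  shows "\<alpha> / 2 * (norm (e - (1 / \<alpha>) *\<^sub>R G))\<^sup>2 = \<alpha> / 2 * (norm e)\<^sup>2 - G \<bullet> e + (norm G)\<^sup>2 / (2 * \<alpha>)"
proof -
  have "(norm (e - (1 / \<alpha>) *\<^sub>R G))\<^sup>2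
      = (norm e)\<^sup>2 - 2 * (1 / \<alpha>) * (G \<bullet> e) + (1 / \<alpha>) * (1 / \<alpha>) * (norm G)\<^sup>2"
    by (simp add: power2_norm_eq_inner inner_commute algebra_simps)
  then show ?thesis using assms by (simp add: field_simps power2_eq_square)
qed

lemma convex_smooth_cocoercive:
  fixes F :: "'a::real_inner \<Rightarrow> real"
  assumes cvx: "convex_on UNIV F" and der: "\<And>x. (F has_derivative (\<lambda>h. G x \<bullet> h)) (at x)"
    and lip: "\<And>x y. norm (G x - G y) \<le> L * norm (x - y)" and L: "L > 0"
  shows "F x + G x \<bullet> (y - x) + (norm (G y - G x))\<^sup>2 / (2 * L) \<le> F y"
proof -
  define \<phi> where "\<phi> z = F z - G x \<bullet> z" for z
  have "(\<phi> has_derivative (\<lambda>h. (G z - G x) \<bullet> h)) (at z)" for z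
    unfolding \<phi>_def inner_diff_left by (rule derivative_eq_intros der refl)+
  moreover have "norm ((G a - G x) - (G b - G x)) \<le> L * norm (a - b)" for a b
    using lip by simp
  ultimately have "\<phi> w \<le> \<phi> y + (G y - G x) \<bullet> (w - y) + L / 2 * (norm (w - y))\<^sup>2" for w
    by (rule descent_lemma)
  from this[of "y - (1 / L) *\<^sub>R (G y - G x)"]
  have "\<phi> (y - (1 / L) *\<^sub>R (G y - G x)) \<le> \<phi> y - (norm (G y - G x))\<^sup>2 / (2 * L)"
    using norm_step_square[OF L, of 0 "G y - G x"] L by (simp add: power2_norm_eq_inner)
  moreover have "\<phi> x \<le> \<phi> z" for z
    using convex_on_gradient_inequality[OF cvx der, of x z] by (simp add: \<phi>_def inner_diff_right)
  ultimately show ?thesis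
    by (smt (verit) \<phi>_def inner_diff_right)
qed

lemma gradient_zero_at_minimizer:
  fixes F :: "'a::real_inner \<Rightarrow> real"
  assumes "(F has_derivative (\<lambda>h. G \<bullet> h)) (at x)" and "\<And>y. F x \<le> F y"
  shows "G = 0"
proof -
  have "(\<lambda>h. G \<bullet> h) = (\<lambda>h. 0)"
    using assms by (intro has_derivative_local_min) auto
  then have "G \<bullet> G = 0" by (rule fun_cong)
  then show ?thesis by simp
qed

lemma arg_min_proximal_step:
  fixes G z :: "'a::real_inner"
  assumes \<alpha>: "\<alpha> > 0"
  shows "(ARG_MIN (\<lambda>x. G \<bullet> x + \<alpha> / 2 * (norm (x - z))\<^sup>2) x. True) = z - (1 / \<alpha>) *\<^sub>R G"
proof -
  define m where "m = z - (1 / \<alpha>) *\<^sub>R G"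
  define \<phi> where "\<phi> x = G \<bullet> x + \<alpha> / 2 * (norm (x - z))\<^sup>2" for x
  have split: "\<phi> x = \<phi> m + \<alpha> / 2 * (norm (x - m))\<^sup>2" for x
    using norm_step_square[OF \<alpha>, of "x - m" G] norm_step_square[OF \<alpha>, of 0 G]
    by (simp add: \<phi>_def m_def algebra_simps)
  have "is_arg_min \<phi> (\<lambda>_. True) x \<longleftrightarrow> x = m" for x
  proof
    assume "is_arg_min \<phi> (\<lambda>_. True) x"
    then have "\<phi> x \<le> \<phi> m" by (simp add: is_arg_min_def not_less)
    then show "x = m" using split[of x] \<alpha> by (simp add: mult_le_0_iff)
  next
    assume "x = m"
    have "\<phi> m \<le> \<phi> y" for y
      using split[of y] \<alpha> by simp
    then show "is_arg_min \<phi> (\<lambda>_. True) x"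
      using \<open>x = m\<close> by (simp add: is_arg_min_def not_less)
  qed
  then show ?thesis
    unfolding arg_min_def \<phi>_def[symmetric] m_def[symmetric] by (intro some_equality) auto
qed

section \<open>I.i.d. sequences stopped at the first success\<close>

primrec random_orbit :: "('s \<Rightarrow> 'i \<Rightarrow> 's) \<Rightarrow> 's \<Rightarrow> (nat \<Rightarrow> 'i \<times> bool) \<Rightarrow> nat \<Rightarrow> 's" where
  "random_orbit st z \<omega> 0 = z"
| "random_orbit st z \<omega> (Suc k) = st (random_orbit st z \<omega> k) (fst (\<omega> k))"

lemma random_orbit_case_nat:
  "random_orbit st z (case_nat a \<omega>) (Suc k) = random_orbit st (st z (fst a)) \<omega> k"
  by (induction k) auto

lemma random_orbit_cong:
  "(\<And>j z. j < k \<Longrightarrow> st z (fst (\<omega> j)) = st' z (fst (\<omega> j))) \<Longrightarrow>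
    random_orbit st z \<omega> k = random_orbit st' z \<omega> k"
  by (induction k) auto

lemma nn_integral_PiM_case_nat:
  fixes M :: "'b measure" and F :: "(nat \<Rightarrow> 'b) \<Rightarrow> ennreal"
  assumes "prob_space M" and [measurable]: "F \<in> borel_measurable (\<Pi>\<^sub>M k\<in>UNIV. M)"
  shows "(\<integral>\<^sup>+ \<omega>. F \<omega> \<partial>(\<Pi>\<^sub>M k\<in>UNIV. M))
    = (\<integral>\<^sup>+ a. (\<integral>\<^sup>+ \<omega>. F (case_nat a \<omega>) \<partial>(\<Pi>\<^sub>M k\<in>UNIV. M)) \<partial>M)"
proof -
  interpret prob_space M by fact
  interpret S: sequence_space M ..
  interpret P: pair_sigma_finite M S.S ..
  have "(\<integral>\<^sup>+ \<omega>. F \<omega> \<partial>S.S) = (\<integral>\<^sup>+ X. F ((\<lambda>(s, \<omega>). case_nat s \<omega>) X) \<partial>(M \<Otimes>\<^sub>M S.S))"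
    by (subst S.PiM_iter[symmetric]) (simp add: nn_integral_distr)
  also have "\<dots> = (\<integral>\<^sup>+ a. \<integral>\<^sup>+ \<omega>. F ((\<lambda>(s, \<omega>). case_nat s \<omega>) (a, \<omega>)) \<partial>S.S \<partial>M)"
    by (subst S.nn_integral_fst) simp_all
  finally show ?thesis by simp
qed

abbreviation iid_seq :: "'a pmf \<Rightarrow> (nat \<Rightarrow> 'a) measure" where
  "iid_seq \<mu> \<equiv> \<Pi>\<^sub>M k\<in>UNIV. measure_pmf \<mu>"

lemma measurable_iid_index [measurable]:
  "(\<lambda>\<omega>. fst (\<omega> k)) \<in> (iid_seq \<mu>) \<rightarrow>\<^sub>M count_space UNIV"
  "Measurable.pred (iid_seq \<mu>) (\<lambda>\<omega>. snd (\<omega> k))"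
proof -
  have "(\<lambda>\<omega>. \<omega> k) \<in> (iid_seq \<mu>) \<rightarrow>\<^sub>M measure_pmf \<mu>"
    by (rule measurable_component_singleton) simp
  then show "(\<lambda>\<omega>. fst (\<omega> k)) \<in> (iid_seq \<mu>) \<rightarrow>\<^sub>M count_space UNIV"
    and "Measurable.pred (iid_seq \<mu>) (\<lambda>\<omega>. snd (\<omega> k))"
    by (rule measurable_compose, simp)+
qed

lemma measurable_random_orbit:
  fixes \<mu> :: "('i::countable \<times> bool) pmf"
  assumes st: "\<And>i. (\<lambda>z. st z i) \<in> S \<rightarrow>\<^sub>M S" and z: "z \<in> space S"
  shows "(\<lambda>\<omega>. random_orbit st z \<omega> k) \<in> (iid_seq \<mu>) \<rightarrow>\<^sub>M S"
proof (induction k)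
  case (Suc k)
  have "(\<lambda>\<omega>. (\<lambda>i. st (random_orbit st z \<omega> k) i) (fst (\<omega> k))) \<in> (iid_seq \<mu>) \<rightarrow>\<^sub>M S"
    by (rule measurable_compose_countable[OF measurable_compose[OF Suc st] measurable_iid_index(1)])
  then show ?case by simp
qed (use z in simp)

lemma nn_integral_iid_no_success:
  fixes \<mu> :: "('i \<times> bool) pmf"
  shows "(\<integral>\<^sup>+ \<omega>. of_bool (\<forall>k<K. \<not> snd (\<omega> k)) \<partial>iid_seq \<mu>) = emeasure (measure_pmf \<mu>) {a. \<not> snd a} ^ K"
proof (induction K)
  case 0
  interpret prob_space "iid_seq \<mu>"
    by (intro prob_space_PiM prob_space_measure_pmf)
  show ?case by (simp add: emeasure_space_1)
next
  case (Suc K)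
  have "(\<lambda>\<omega>. of_bool (\<forall>k<Suc K. \<not> snd (\<omega> k)) :: ennreal) \<in> borel_measurable (iid_seq \<mu>)"
    by measurable
  then have "(\<integral>\<^sup>+ \<omega>. of_bool (\<forall>k<Suc K. \<not> snd (\<omega> k)) \<partial>iid_seq \<mu>)
      = (\<integral>\<^sup>+ a. (\<integral>\<^sup>+ \<omega>. of_bool (\<forall>k<Suc K. \<not> snd (case_nat a \<omega> k)) \<partial>iid_seq \<mu>) \<partial>\<mu>)"
    by (rule nn_integral_PiM_case_nat[OF prob_space_measure_pmf])
  also have "\<dots> = (\<integral>\<^sup>+ a. emeasure (measure_pmf \<mu>) {a. \<not> snd a} ^ K * indicator {a. \<not> snd a} a \<partial>\<mu>)"
    by (intro nn_integral_cong) (auto simp: All_less_Suc2 Suc split: split_indicator)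
  also have "\<dots> = emeasure (measure_pmf \<mu>) {a. \<not> snd a} ^ Suc K"
    by (subst nn_integral_cmult_indicator) (simp_all add: mult.commute)
  finally show ?case .
qed

lemma AE_PiM_first_success:
  fixes \<mu> :: "('i \<times> bool) pmf"
  assumes fail: "emeasure (measure_pmf \<mu>) {a. \<not> snd a} < 1"
  shows "AE \<omega> in iid_seq \<mu>. \<exists>k. snd (\<omega> k)"
proof -
  let ?P = "iid_seq \<mu>"
  let ?c = "emeasure (measure_pmf \<mu>) {a. \<not> snd a}"
  define N :: "(nat \<Rightarrow> 'i \<times> bool) set" where "N = {\<omega> \<in> space ?P. \<forall>k. \<not> snd (\<omega> k)}"
  have N_sets: "N \<in> sets ?P"
    unfolding N_def by measurable
  have N_le: "emeasure ?P N \<le> ?c ^ K" for K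
  proof -
    have "emeasure ?P N = (\<integral>\<^sup>+ \<omega>. indicator N \<omega> \<partial>?P)"
      using N_sets by simp
    also have "\<dots> \<le> (\<integral>\<^sup>+ \<omega>. of_bool (\<forall>k<K. \<not> snd (\<omega> k)) \<partial>?P)"
      by (intro nn_integral_mono) (auto simp: N_def split: split_indicator)
    finally show ?thesis by (simp add: nn_integral_iid_no_success)
  qed
  obtain q where q: "?c = ennreal q" "0 \<le> q" "q < 1"
    using fail by (cases ?c rule: ennreal_cases) auto
  have "emeasure ?P N \<le> ennreal (q ^ K)" for K
    using N_le[of K] q by (simp add: ennreal_power)
  moreover have "(\<lambda>K. ennreal (q ^ K)) \<longlonglongrightarrow> ennreal 0"
    using q by (intro tendsto_ennrealI LIMSEQ_power_zero) auto
  ultimately have "emeasure ?P N \<le> 0"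
    by (intro LIMSEQ_le_const) auto
  then have "N \<in> null_sets ?P"
    using N_sets by (simp add: null_sets_def)
  moreover have "{\<omega> \<in> space ?P. \<not> (\<exists>k. snd (\<omega> k))} \<subseteq> N"
    by (auto simp: N_def)
  ultimately show ?thesis
    by (rule AE_I')
qed

definition stopped_reward ::
    "nat \<Rightarrow> ('s \<Rightarrow> ennreal) \<Rightarrow> ('s \<Rightarrow> 'i \<Rightarrow> 's) \<Rightarrow> 's \<Rightarrow> (nat \<Rightarrow> 'i \<times> bool) \<Rightarrow> ennreal" where
  "stopped_reward K r st z \<omega> =
     (if \<exists>k<K. snd (\<omega> k) then r (random_orbit st z \<omega> (LEAST k. snd (\<omega> k))) else 0)"

lemma stopped_reward_Suc_case_nat:
  "stopped_reward (Suc K) r st z (case_nat a \<omega>) =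
     (if snd a then r z else stopped_reward K r st (st z (fst a)) \<omega>)"
proof (cases "snd a")
  case True
  then have "(LEAST k. snd (case_nat a \<omega> k)) = 0"
    by (intro Least_eq_0) simp
  with True show ?thesis
    by (auto simp: stopped_reward_def)
next
  case False
  then have "(\<exists>k<Suc K. snd (case_nat a \<omega> k)) \<longleftrightarrow> (\<exists>k<K. snd (\<omega> k))"
    by (auto simp: less_Suc_eq_0_disj)
  moreover have "(LEAST k. snd (case_nat a \<omega> k)) = Suc (LEAST k. snd (\<omega> k))" if "snd (\<omega> k)" for k
    using False that by (subst Least_Suc[of _ "Suc k"]) auto
  ultimately show ?thesis
    using False by (auto simp: stopped_reward_def random_orbit_case_nat simp del: random_orbit.simps)
qed

lemma measurable_stopped_reward:
  fixes \<mu> :: "('i::countable \<times> bool) pmf"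
  assumes st: "\<And>i. (\<lambda>z. st z i) \<in> S \<rightarrow>\<^sub>M S" and r: "r \<in> borel_measurable S" and z: "z \<in> space S"
  shows "stopped_reward K r st z \<in> borel_measurable (iid_seq \<mu>)"
proof -
  have first_success: "(\<lambda>\<omega>::nat \<Rightarrow> 'i \<times> bool. LEAST k. snd (\<omega> k))
      \<in> (iid_seq \<mu>) \<rightarrow>\<^sub>M count_space UNIV"
    by measurable
  have [measurable]: "(\<lambda>\<omega>. r (random_orbit st z \<omega> (LEAST k. snd (\<omega> k))))
      \<in> borel_measurable (iid_seq \<mu>)"
    by (rule measurable_compose_countable[OF _ first_success],
        rule measurable_compose[OF measurable_random_orbit[OF st z] r])
  show ?thesis
    unfolding stopped_reward_def[abs_def] by measurable
qed

lemma nn_integral_stopped_reward_le: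
  fixes \<mu> :: "('i::countable \<times> bool) pmf"
  assumes st: "\<And>i. (\<lambda>z. st z i) \<in> S \<rightarrow>\<^sub>M S" and r: "r \<in> borel_measurable S"
    and super: "\<And>z. z \<in> space S \<Longrightarrow> (\<integral>\<^sup>+ a. (if snd a then r z else B (st z (fst a))) \<partial>\<mu>) \<le> B z"
    and z: "z \<in> space S"
  shows "(\<integral>\<^sup>+ \<omega>. stopped_reward K r st z \<omega> \<partial>(iid_seq \<mu>)) \<le> B z"
  using z
proof (induction K arbitrary: z)
  case 0
  then show ?case by (simp add: stopped_reward_def)
next
  case (Suc K)
  let ?P = "iid_seq \<mu>"
  interpret P: prob_space ?P
    by (intro prob_space_PiM prob_space_measure_pmf)
  have "(\<integral>\<^sup>+ \<omega>. stopped_reward (Suc K) r st z \<omega> \<partial>?P)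
      = (\<integral>\<^sup>+ a. (\<integral>\<^sup>+ \<omega>. stopped_reward (Suc K) r st z (case_nat a \<omega>) \<partial>?P) \<partial>\<mu>)"
    by (rule nn_integral_PiM_case_nat[OF prob_space_measure_pmf measurable_stopped_reward[OF st r Suc.prems]])
  also have "\<dots> = (\<integral>\<^sup>+ a. (if snd a then r z else \<integral>\<^sup>+ \<omega>. stopped_reward K r st (st z (fst a)) \<omega> \<partial>?P) \<partial>\<mu>)"
    by (intro nn_integral_cong) (simp add: stopped_reward_Suc_case_nat P.emeasure_space_1)
  also have "\<dots> \<le> (\<integral>\<^sup>+ a. (if snd a then r z else B (st z (fst a))) \<partial>\<mu>)"
    using Suc.IH measurable_space[OF st] Suc.prems by (intro nn_integral_mono) auto
  also have "\<dots> \<le> B z"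
    by (rule super[OF Suc.prems])
  finally show ?case .
qed

lemma nn_integral_stopped_orbit_le:
  fixes \<mu> :: "('i::countable \<times> bool) pmf"
  assumes st: "\<And>i. (\<lambda>z. st z i) \<in> S \<rightarrow>\<^sub>M S" and r: "r \<in> borel_measurable S"
    and super: "\<And>z. z \<in> space S \<Longrightarrow> (\<integral>\<^sup>+ a. (if snd a then r z else B (st z (fst a))) \<partial>\<mu>) \<le> B z"
    and z: "z \<in> space S"
  shows "(\<integral>\<^sup>+ \<omega>. (if \<exists>k. snd (\<omega> k) then r (random_orbit st z \<omega> (LEAST k. snd (\<omega> k))) else 0)
      \<partial>(iid_seq \<mu>)) \<le> B z"
proof -
  let ?P = "iid_seq \<mu>"
  have limit: "(if \<exists>k. snd (\<omega> k) then r (random_orbit st z \<omega> (LEAST k. snd (\<omega> k))) else 0)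
      = (SUP K. stopped_reward K r st z \<omega>)" for \<omega>
  proof (cases "\<exists>k. snd (\<omega> k)")
    case True
    then obtain k where "snd (\<omega> k)" by blast
    then have "stopped_reward K r st z \<omega> \<le> stopped_reward (Suc k) r st z \<omega>" for K
      by (auto simp: stopped_reward_def)
    then have "(SUP K. stopped_reward K r st z \<omega>) = stopped_reward (Suc k) r st z \<omega>"
      by (intro antisym SUP_least SUP_upper) auto
    with True \<open>snd (\<omega> k)\<close> show ?thesis
      by (auto simp: stopped_reward_def)
  qed (simp add: stopped_reward_def)
  have "incseq (\<lambda>K. stopped_reward K r st z)"
    by (auto simp: incseq_def le_fun_def stopped_reward_def intro: order.strict_trans2)
  then have "(\<integral>\<^sup>+ \<omega>. (if \<exists>k. snd (\<omega> k) then r (random_orbit st z \<omega> (LEAST k. snd (\<omega> k))) else 0) \<partial>?P)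
      = (SUP K. \<integral>\<^sup>+ \<omega>. stopped_reward K r st z \<omega> \<partial>?P)"
    unfolding limit by (rule nn_integral_monotone_convergence_SUP[OF _ measurable_stopped_reward[OF st r z]])
  also have "\<dots> \<le> B z"
    using nn_integral_stopped_reward_le[OF st r super z] by (rule SUP_least)
  finally show ?thesis .
qed

section \<open>The Acc-SVRG-G iteration\<close>

lemma convex_on_favg:
  assumes "\<And>i. i < n \<Longrightarrow> convex_on UNIV (f i)"
  shows "convex_on UNIV (favg n f)"
proof -
  have "convex_on UNIV (\<lambda>x. \<Sum>i<m. f i x)" if "m \<le> n" for m
    using that by (induction m) (auto simp: convex_on_const assms)
  from this[of n] show ?thesis
    unfolding favg_def[abs_def] by (intro convex_on_cmul) auto
qed

lemma favg_has_derivative: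
  fixes f :: "nat \<Rightarrow> 'a::real_inner \<Rightarrow> real"
  assumes "\<And>i. i < n \<Longrightarrow> (f i has_derivative (\<lambda>h. g i x \<bullet> h)) (at x)"
  shows "(favg n f has_derivative (\<lambda>h. grad_avg n g x \<bullet> h)) (at x)"
proof -
  have "((\<lambda>x. (1 / real n) * (\<Sum>i<n. f i x)) has_derivative
      (\<lambda>h. (1 / real n) * (\<Sum>i<n. g i x \<bullet> h))) (at x)"
    using assms by (intro has_derivative_mult_right has_derivative_sum) auto
  then show ?thesis
    unfolding favg_def[abs_def] grad_avg_def by (simp add: inner_sum_left)
qed

lemma grad_avg_inner: "grad_avg n g x \<bullet> c = (1 / real n) * (\<Sum>i<n. g i x \<bullet> c)"
  by (simp add: grad_avg_def inner_sum_left)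

lemma average_affine:
  assumes "0 < n"
  shows "(1 / real n) * (\<Sum>i<n. c + b * d i) = c + b * ((1 / real n) * (\<Sum>i<n. d i))"
  using assms by (simp add: sum.distrib field_simps flip: sum_distrib_left)

lemma grad_avg_lipschitz:
  assumes "0 < n" and "\<And>i x y. i < n \<Longrightarrow> norm (g i x - g i y) \<le> L * norm (x - y)"
  shows "norm (grad_avg n g x - grad_avg n g y) \<le> L * norm (x - y)"
proof -
  have "norm (grad_avg n g x - grad_avg n g y) = (1 / real n) * norm (\<Sum>i<n. g i x - g i y)"
    by (simp add: grad_avg_def sum_subtractf flip: scaleR_diff_right)
  also have "\<dots> \<le> (1 / real n) * (\<Sum>i<n. L * norm (x - y))"
    using assms(2) by (intro mult_left_mono order_trans[OF norm_sum sum_mono]) auto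
  also have "\<dots> = L * norm (x - y)"
    using assms(1) by simp
  finally show ?thesis .
qed

text \<open>The closed form of the arg-min in the z-step of \<^const>\<open>svrg_state\<close>, see \<open>arg_min_proximal_step\<close>.\<close>

definition svrg_z_update ::
    "nat \<Rightarrow> real \<Rightarrow> (nat \<Rightarrow> 'a \<Rightarrow> 'a) \<Rightarrow> real \<Rightarrow> 'a \<Rightarrow> 'a \<Rightarrow> nat \<Rightarrow> 'a::real_vector" where
  "svrg_z_update n L g \<tau> xt z i =
     z - ((1 - \<tau>) / (L * \<tau>)) *\<^sub>R (g i (svrg_y n L g \<tau> z xt) - g i xt + grad_avg n g xt)"

text \<open>Indices outside \<open>{..<n}\<close> have probability zero; mapping them to the identity makes every
  step measurable without any assumption on \<open>g i\<close> for \<open>i \<ge> n\<close>.\<close>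

definition svrg_z_step ::
    "nat \<Rightarrow> real \<Rightarrow> (nat \<Rightarrow> 'a \<Rightarrow> 'a) \<Rightarrow> real \<Rightarrow> 'a \<Rightarrow> 'a \<Rightarrow> nat \<Rightarrow> 'a::real_vector" where
  "svrg_z_step n L g \<tau> xt z i = (if i < n then svrg_z_update n L g \<tau> xt z i else z)"

lemma svrg_y_momentum:
  assumes "0 < \<tau>"
  shows "z - svrg_y n L g \<tau> z xt
    = ((1 - \<tau>) / \<tau>) *\<^sub>R (svrg_y n L g \<tau> z xt - xt + (1 / L) *\<^sub>R grad_avg n g xt)"
proof -
  have "svrg_y n L g \<tau> z xt - xt + (1 / L) *\<^sub>R grad_avg n g xt
      = \<tau> *\<^sub>R (z - xt + (1 / L) *\<^sub>R grad_avg n g xt)"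
    by (simp add: svrg_y_def algebra_simps) (simp flip: scaleR_add_left add_divide_distrib)
  moreover have "z - svrg_y n L g \<tau> z xt = (1 - \<tau>) *\<^sub>R (z - xt + (1 / L) *\<^sub>R grad_avg n g xt)"
    by (simp add: svrg_y_def algebra_simps)
  ultimately show ?thesis
    using assms by simp
qed

lemma svrg_state_before_success:
  assumes "0 < L" "0 < \<tau>" "\<tau> < 1" and "\<forall>j<k. \<not> snd (\<omega> j)"
  shows "svrg_state n L g \<tau> x0 \<omega> k = (random_orbit (svrg_z_update n L g \<tau> x0) x0 \<omega> k, x0)"
  using assms(4)
proof (induction k)
  case (Suc k)
  then have IH: "svrg_state n L g \<tau> x0 \<omega> k = (random_orbit (svrg_z_update n L g \<tau> x0) x0 \<omega> k, x0)"
    and "\<not> snd (\<omega> k)" by auto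
  have \<alpha>: "L * \<tau> / (1 - \<tau>) > 0"
    using assms(1-3) by simp
  have inverse: "1 / (L * \<tau> / (1 - \<tau>)) = (1 - \<tau>) / (L * \<tau>)"
    by simp
  show ?case
    unfolding svrg_state.simps IH Let_def prod.case arg_min_proximal_step[OF \<alpha>] inverse
      svrg_z_update_def[symmetric]
    using \<open>\<not> snd (\<omega> k)\<close> by simp
qed simp

lemma svrg_output_eq_orbit:
  assumes "0 < L" "0 < \<tau>" "\<tau> < 1"
  shows "svrg_output n L g \<tau> x0 \<omega>
    = svrg_y n L g \<tau> (random_orbit (svrg_z_update n L g \<tau> x0) x0 \<omega> (svrg_N \<omega>)) x0"
proof -
  have "\<forall>j<svrg_N \<omega>. \<not> snd (\<omega> j)"
    unfolding svrg_N_def using not_less_Least by blast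
  then have "svrg_state n L g \<tau> x0 \<omega> (svrg_N \<omega>)
      = (random_orbit (svrg_z_update n L g \<tau> x0) x0 \<omega> (svrg_N \<omega>), x0)"
    by (rule svrg_state_before_success[OF assms])
  then show ?thesis
    by (simp add: svrg_output_def)
qed

definition svrg_pmf :: "nat \<Rightarrow> (nat \<times> bool) pmf" where
  "svrg_pmf n = pair_pmf (pmf_of_set {..<n}) (bernoulli_pmf (1 / real n))"

lemma svrg_space_eq: "svrg_space n = iid_seq (svrg_pmf n)"
  by (simp add: svrg_space_def svrg_pmf_def)

lemma nn_integral_svrg_pmf:
  assumes n: "0 < n" and R: "0 \<le> R" and W: "\<And>i. 0 \<le> W i"
  shows "(\<integral>\<^sup>+ a. (if snd a then ennreal R else ennreal (W (fst a))) \<partial>svrg_pmf n)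
    = ennreal ((1 / real n) * R + (1 - 1 / real n) * ((1 / real n) * (\<Sum>i<n. W i)))"
proof -
  define p where "p = 1 / real n"
  have p: "0 \<le> p" "p \<le> 1"
    using n by (auto simp: p_def)
  have nonneg: "0 \<le> p * R + (1 - p) * W i" for i
    using p R W by (intro add_nonneg_nonneg mult_nonneg_nonneg) auto
  have "(\<integral>\<^sup>+ a. (if snd a then ennreal R else ennreal (W (fst a))) \<partial>svrg_pmf n)
      = (\<integral>\<^sup>+ i. (\<integral>\<^sup>+ b. (if b then ennreal R else ennreal (W i)) \<partial>bernoulli_pmf p) \<partial>pmf_of_set {..<n})"
    unfolding svrg_pmf_def p_def nn_integral_pair_pmf' by (intro nn_integral_cong) simp
  also have "\<dots> = (\<integral>\<^sup>+ i. ennreal (p * R + (1 - p) * W i) \<partial>pmf_of_set {..<n})"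
    using p R W by (intro nn_integral_cong) (simp add: ennreal_mult mult.commute)
  also have "\<dots> = ennreal (\<Sum>i<n. p * R + (1 - p) * W i) / real n"
  proof -
    have "{..<n} \<noteq> {}"
      using n by auto
    with nonneg show ?thesis
      by (subst nn_integral_pmf_of_set) (simp_all add: ennreal_of_nat_eq_real_of_nat del: ennreal_plus)
  qed
  also have "\<dots> = ennreal (p * (\<Sum>i<n. p * R + (1 - p) * W i))"
    using n nonneg by (subst divide_ennreal) (auto intro!: sum_nonneg simp: p_def)
  also have "p * (\<Sum>i<n. p * R + (1 - p) * W i) = p * R + (1 - p) * (p * (\<Sum>i<n. W i))"
    unfolding p_def by (rule average_affine[OF n])
  finally show ?thesis
    by (simp add: p_def)
qed

lemma AE_svrg_pmf_index:
  assumes "0 < n"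
  shows "AE a in svrg_pmf n. fst a < n"
proof -
  have "set_pmf (pmf_of_set {..<n}) = {..<n}"
    using assms by (intro set_pmf_of_set) auto
  then show ?thesis
    by (auto simp: AE_measure_pmf_iff svrg_pmf_def)
qed

lemma AE_svrg_index: "0 < n \<Longrightarrow> AE \<omega> in svrg_space n. \<forall>k. fst (\<omega> k) < n"
  unfolding svrg_space_eq AE_all_countable
  by (intro allI AE_PiM_component[where P = "\<lambda>a. fst a < n"] prob_space_measure_pmf AE_svrg_pmf_index)
    auto

lemma AE_svrg_success:
  assumes n: "0 < n"
  shows "AE \<omega> in svrg_space n. \<exists>k. snd (\<omega> k)"
  unfolding svrg_space_eq
proof (rule AE_PiM_first_success)
  have "emeasure (measure_pmf (svrg_pmf n)) {a. \<not> snd a} = (\<integral>\<^sup>+ a. indicator {a. \<not> snd a} a \<partial>svrg_pmf n)"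
    by simp
  also have "\<dots> = (\<integral>\<^sup>+ a. (if snd a then ennreal 0 else ennreal 1) \<partial>svrg_pmf n)"
    by (intro nn_integral_cong) (simp split: split_indicator)
  also have "\<dots> = ennreal (1 - 1 / real n)"
    using nn_integral_svrg_pmf[OF n, of 0 "\<lambda>_. 1"] n by simp
  finally show "emeasure (measure_pmf (svrg_pmf n)) {a. \<not> snd a} < 1"
    using n by simp
qed

lemma nn_integral_svrg_N:
  assumes n: "0 < n"
  shows "(\<integral>\<^sup>+ \<omega>. ennreal (real (svrg_N \<omega>) + 1) \<partial>svrg_space n) \<le> ennreal (real n)"
proof -
  have counter: "random_orbit (\<lambda>c i. Suc c) 0 \<omega> k = k" for \<omega> :: "nat \<Rightarrow> nat \<times> bool" and k
    by (induction k) auto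
  have "(\<integral>\<^sup>+ a. (if snd a then ennreal (real c + 1) else ennreal (real (Suc c) + real n)) \<partial>svrg_pmf n)
      \<le> ennreal (real c + real n)" for c
  proof -
    have "(1 / real n) * (real c + 1) + (1 - 1 / real n) * ((1 / real n) * (\<Sum>i<n. real (Suc c) + real n))
        = real c + real n"
      using n by (simp add: field_simps)
    then show ?thesis
      using nn_integral_svrg_pmf[OF n, of "real c + 1" "\<lambda>_. real (Suc c) + real n"] by simp
  qed
  then have "(\<integral>\<^sup>+ \<omega>. (if \<exists>k. snd (\<omega> k) then ennreal (real (random_orbit (\<lambda>c i. Suc c) 0 \<omega> (LEAST k. snd (\<omega> k))) + 1) else 0)
      \<partial>iid_seq (svrg_pmf n)) \<le> ennreal (real 0 + real n)"
    by (intro nn_integral_stopped_orbit_le[where S = "count_space UNIV" and st = "\<lambda>c i. Suc c"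
          and r = "\<lambda>c. ennreal (real c + 1)" and B = "\<lambda>c. ennreal (real c + real n)"]) auto
  moreover have "(\<lambda>\<omega>. if \<exists>k. snd (\<omega> k) then ennreal (real (random_orbit (\<lambda>c i. Suc c) 0 \<omega> (LEAST k. snd (\<omega> k))) + 1) else 0)
      = (\<lambda>\<omega>. if \<exists>k. snd (\<omega> k) then ennreal (real (svrg_N \<omega>) + 1) else 0)"
    by (simp add: fun_eq_iff counter svrg_N_def)
  ultimately have bound: "(\<integral>\<^sup>+ \<omega>. (if \<exists>k. snd (\<omega> k) then ennreal (real (svrg_N \<omega>) + 1) else 0) \<partial>svrg_space n)
      \<le> ennreal (real n)"
    by (simp add: svrg_space_eq)
  have "(\<integral>\<^sup>+ \<omega>. ennreal (real (svrg_N \<omega>) + 1) \<partial>svrg_space n)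
      = (\<integral>\<^sup>+ \<omega>. (if \<exists>k. snd (\<omega> k) then ennreal (real (svrg_N \<omega>) + 1) else 0) \<partial>svrg_space n)"
    using AE_svrg_success[OF n] by (intro nn_integral_cong_AE) auto
  with bound show ?thesis
    by simp
qed

lemma svrg_expected_oracle_calls:
  assumes n: "0 < n"
  shows "(\<integral>\<^sup>+ \<omega>. ennreal (real n + 2 * (real (svrg_N \<omega>) + 1)) \<partial>svrg_space n) \<le> ennreal (3 * real n)"
proof -
  have [measurable]: "svrg_N \<in> svrg_space n \<rightarrow>\<^sub>M count_space UNIV"
    unfolding svrg_space_eq svrg_N_def[abs_def] by measurable
  interpret P: prob_space "svrg_space n"
    unfolding svrg_space_eq by (intro prob_space_PiM prob_space_measure_pmf)
  have calls: "(\<lambda>\<omega>. ennreal (real (svrg_N \<omega>) + 1)) \<in> borel_measurable (svrg_space n)"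
    by measurable
  have "(\<integral>\<^sup>+ \<omega>. ennreal (real n + 2 * (real (svrg_N \<omega>) + 1)) \<partial>svrg_space n)
      = (\<integral>\<^sup>+ \<omega>. ennreal (real n) + 2 * ennreal (real (svrg_N \<omega>) + 1) \<partial>svrg_space n)"
    by (intro nn_integral_cong) (simp add: ennreal_mult)
  also have "\<dots> = (\<integral>\<^sup>+ \<omega>. ennreal (real n) \<partial>svrg_space n) + (\<integral>\<^sup>+ \<omega>. 2 * ennreal (real (svrg_N \<omega>) + 1) \<partial>svrg_space n)"
    using calls by (intro nn_integral_add) auto
  also have "\<dots> = ennreal (real n) + 2 * (\<integral>\<^sup>+ \<omega>. ennreal (real (svrg_N \<omega>) + 1) \<partial>svrg_space n)"
    by (subst nn_integral_cmult[OF calls]) (simp_all add: P.emeasure_space_1)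
  also have "\<dots> \<le> ennreal (real n) + 2 * ennreal (real n)"
    using nn_integral_svrg_N[OF n] by (intro add_left_mono mult_left_mono) auto
  also have "\<dots> = (1 + 2) * ennreal (real n)"
    by (simp only: distrib_right mult_1)
  also have "\<dots> = ennreal (3 * real n)"
    by (simp add: ennreal_mult)
  finally show ?thesis .
qed

lemma AE_svrg_output_eq_orbit:
  assumes "0 < n" "0 < L" "0 < \<tau>" "\<tau> < 1"
  shows "AE \<omega> in svrg_space n. (\<exists>k. snd (\<omega> k)) \<and>
    svrg_output n L g \<tau> x0 \<omega> = svrg_y n L g \<tau> (random_orbit (svrg_z_step n L g \<tau> x0) x0 \<omega> (svrg_N \<omega>)) x0"
  using AE_svrg_index[OF assms(1)] AE_svrg_success[OF assms(1)]
proof eventually_elim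
  case (elim \<omega>)
  then have "random_orbit (svrg_z_step n L g \<tau> x0) x0 \<omega> k = random_orbit (svrg_z_update n L g \<tau> x0) x0 \<omega> k" for k
    by (intro random_orbit_cong) (simp add: svrg_z_step_def)
  with elim show ?case
    by (simp add: svrg_output_eq_orbit[OF assms(2-4)])
qed

locale svrg_problem =
  fixes f :: "nat \<Rightarrow> 'a::euclidean_space \<Rightarrow> real"
    and g :: "nat \<Rightarrow> 'a \<Rightarrow> 'a"
    and n :: nat and L :: real and xstar :: 'a
  assumes n_pos: "0 < n"
    and L_pos: "0 < L"
    and convex: "\<And>i. i < n \<Longrightarrow> convex_on UNIV (f i)"
    and gradient: "\<And>i x. i < n \<Longrightarrow> (f i has_derivative (\<lambda>h. g i x \<bullet> h)) (at x)"
    and smooth: "\<And>i x y. i < n \<Longrightarrow> norm (g i x - g i y) \<le> L * norm (x - y)"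
    and minimizer: "\<And>x. favg n f xstar \<le> favg n f x"
begin

abbreviation "F \<equiv> favg n f"
abbreviation "GF \<equiv> grad_avg n g"

lemma F_convex: "convex_on UNIV F"
  using convex by (rule convex_on_favg)

lemma F_has_derivative: "(F has_derivative (\<lambda>h. GF x \<bullet> h)) (at x)"
  by (intro favg_has_derivative gradient)

lemma GF_lipschitz: "norm (GF x - GF y) \<le> L * norm (x - y)"
  using n_pos smooth by (rule grad_avg_lipschitz)

lemma GF_xstar: "GF xstar = 0"
  using F_has_derivative minimizer by (rule gradient_zero_at_minimizer)

lemma F_gap_le: "F x - F xstar \<le> L / 2 * (norm (x - xstar))\<^sup>2"
  using descent_lemma[OF F_has_derivative GF_lipschitz, of x xstar] GF_xstar by simp

lemma norm_GF_square_le: "(norm (GF x))\<^sup>2 \<le> 2 * L * (F x - F xstar)"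
  using convex_smooth_cocoercive[OF F_convex F_has_derivative GF_lipschitz L_pos, of xstar x]
    GF_xstar L_pos by (simp add: field_simps)

lemma F_continuous: "continuous_on UNIV F"
  using F_has_derivative
  by (intro continuous_at_imp_continuous_on) (auto intro: has_derivative_continuous)

lemma GF_continuous: "continuous_on UNIV GF"
  using GF_lipschitz L_pos
  by (intro lipschitz_on_continuous_on[of L] lipschitz_onI) (auto simp: dist_norm)

lemma component_gradient_variance:
  "(1 / real n) * (\<Sum>i<n. (norm (g i y - g i x))\<^sup>2) \<le> 2 * L * (F x - F y - GF y \<bullet> (x - y))"
proof -
  have "(norm (g i y - g i x))\<^sup>2 \<le> 2 * L * (f i x - f i y - g i y \<bullet> (x - y))" if "i < n" for i
    using convex_smooth_cocoercive[OF convex gradient smooth L_pos, OF that that that, of y x] L_pos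
    by (simp add: norm_minus_commute field_simps)
  then have "(1 / real n) * (\<Sum>i<n. (norm (g i y - g i x))\<^sup>2)
      \<le> (1 / real n) * (\<Sum>i<n. 2 * L * (f i x - f i y - g i y \<bullet> (x - y)))"
    by (intro mult_left_mono sum_mono) auto
  also have "\<dots> = 2 * L * (F x - F y - GF y \<bullet> (x - y))"
    unfolding favg_def grad_avg_inner
    by (simp only: flip: sum_distrib_left) (simp add: sum_subtractf sum.distrib algebra_simps)
  finally show ?thesis .
qed

lemma svrg_estimator_second_moment:
  "(1 / real n) * (\<Sum>i<n. (norm (g i y - g i x + GF x))\<^sup>2)
     \<le> 2 * L * (F x - F y - GF y \<bullet> (x - y)) + 2 * (GF y \<bullet> GF x) - (norm (GF x))\<^sup>2"
proof -
  have expand: "(norm (g i y - g i x + GF x))\<^sup>2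
      = (norm (g i y - g i x))\<^sup>2 + 2 * (g i y \<bullet> GF x - g i x \<bullet> GF x) + (norm (GF x))\<^sup>2" for i
    by (simp add: power2_norm_eq_inner inner_add_left inner_add_right inner_diff_right inner_commute)
  have "(1 / real n) * (\<Sum>i<n. (norm (g i y - g i x + GF x))\<^sup>2)
      = (1 / real n) * (\<Sum>i<n. (norm (g i y - g i x))\<^sup>2)
        + 2 * (GF y \<bullet> GF x - GF x \<bullet> GF x) + (norm (GF x))\<^sup>2"
    unfolding expand grad_avg_inner[of n g y] grad_avg_inner[of n g x] using n_pos
    by (simp add: sum.distrib sum_subtractf flip: sum_distrib_left) (simp add: field_simps)
  moreover have "GF x \<bullet> GF x = (norm (GF x))\<^sup>2"
    by (simp add: power2_norm_eq_inner)
  ultimately show ?thesis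
    using component_gradient_variance[of y x] by argo
qed

lemma average_distance_after_update:
  fixes z x0 :: 'a
  assumes \<tau>: "0 < \<tau>" "\<tau> < 1"
  defines "y \<equiv> svrg_y n L g \<tau> z x0" and "\<alpha> \<equiv> L * \<tau> / (1 - \<tau>)"
  shows "(1 / real n) * (\<Sum>i<n. \<alpha> / 2 * (norm (svrg_z_update n L g \<tau> x0 z i - xstar))\<^sup>2)
    = \<alpha> / 2 * (norm (z - xstar))\<^sup>2 - GF y \<bullet> (z - xstar)
      + (1 - \<tau>) / \<tau> / (2 * L) * ((1 / real n) * (\<Sum>i<n. (norm (g i y - g i x0 + GF x0))\<^sup>2))"
proof -
  have \<alpha>: "\<alpha> > 0" and \<alpha>_eq: "\<alpha> = L / ((1 - \<tau>) / \<tau>)"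
    using \<tau> L_pos by (auto simp: \<alpha>_def)
  have step: "\<alpha> / 2 * (norm (svrg_z_update n L g \<tau> x0 z i - xstar))\<^sup>2
      = \<alpha> / 2 * (norm (z - xstar))\<^sup>2 - (g i y - g i x0 + GF x0) \<bullet> (z - xstar)
        + (1 - \<tau>) / \<tau> / (2 * L) * (norm (g i y - g i x0 + GF x0))\<^sup>2" for i
  proof -
    have update: "svrg_z_update n L g \<tau> x0 z i - xstar
        = (z - xstar) - (1 / \<alpha>) *\<^sub>R (g i y - g i x0 + GF x0)"
      by (simp add: svrg_z_update_def y_def \<alpha>_def)
    show ?thesis
      unfolding update norm_step_square[OF \<alpha>] using \<tau> L_pos by (simp add: \<alpha>_eq field_simps)
  qed
  have inner: "(g i y - g i x0 + GF x0) \<bullet> (z - xstar)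
      = g i y \<bullet> (z - xstar) - g i x0 \<bullet> (z - xstar) + GF x0 \<bullet> (z - xstar)" for i
    by (simp only: inner_add_left inner_diff_left)
  have mean: "(1 / real n) * (\<Sum>i<n. (g i y - g i x0 + GF x0) \<bullet> (z - xstar)) = GF y \<bullet> (z - xstar)"
    unfolding inner grad_avg_inner using n_pos
    by (simp add: sum.distrib sum_subtractf flip: sum_distrib_left)
  have average: "(1 / real n) * (\<Sum>i<n. a - b i + c * d i)
      = a - (1 / real n) * (\<Sum>i<n. b i) + c * ((1 / real n) * (\<Sum>i<n. d i))"
    for a c :: real and b d :: "nat \<Rightarrow> real"
    using n_pos by (simp add: sum.distrib sum_subtractf field_simps flip: sum_distrib_left)
  show ?thesis
    unfolding step average mean ..
qed

lemma one_step_estimate: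
  fixes z x0 :: 'a
  assumes \<tau>: "0 < \<tau>" "\<tau> < 1"
  defines "y \<equiv> svrg_y n L g \<tau> z x0" and "\<alpha> \<equiv> L * \<tau> / (1 - \<tau>)"
  shows "(F y - F xstar) / \<tau> + (norm (GF y))\<^sup>2 / (2 * L)
      + (1 / real n) * (\<Sum>i<n. \<alpha> / 2 * (norm (svrg_z_update n L g \<tau> x0 z i - xstar))\<^sup>2)
    \<le> \<alpha> / 2 * (norm (z - xstar))\<^sup>2 + (1 - \<tau>) / \<tau> * (F x0 - F xstar)"
proof -
  define q where "q = (1 - \<tau>) / \<tau>"
  define u where "u = GF y"
  define v where "v = GF x0"
  have q: "q > 0"
    using \<tau> by (simp add: q_def)
  have "q / (2 * L) * ((1 / real n) * (\<Sum>i<n. (norm (g i y - g i x0 + v))\<^sup>2))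
      \<le> q / (2 * L) * (2 * L * (F x0 - F y - u \<bullet> (x0 - y)) + 2 * (u \<bullet> v) - (norm v)\<^sup>2)"
    using svrg_estimator_second_moment[of y x0] q L_pos
    by (intro mult_left_mono) (simp_all add: u_def v_def)
  also have "\<dots> = q * F x0 - q * F y + q * (u \<bullet> (y - x0)) + q / L * (u \<bullet> v) - q / (2 * L) * (norm v)\<^sup>2"
    using L_pos by (simp add: field_simps inner_diff_right)
  finally have variance: "q / (2 * L) * ((1 / real n) * (\<Sum>i<n. (norm (g i y - g i x0 + v))\<^sup>2))
      \<le> q * F x0 - q * F y + q * (u \<bullet> (y - x0)) + q / L * (u \<bullet> v)"
    using q L_pos by (smt (verit) divide_nonneg_pos zero_le_power2 mult_nonneg_nonneg)
  have "u \<bullet> (z - y) = q * (u \<bullet> (y - x0)) + q / L * (u \<bullet> v)"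
    unfolding y_def svrg_y_momentum[OF \<tau>(1)] by (simp add: q_def u_def v_def y_def algebra_simps)
  moreover have "u \<bullet> (z - xstar) = u \<bullet> (z - y) + u \<bullet> (y - xstar)"
    by (simp add: inner_diff_right)
  ultimately have momentum: "u \<bullet> (z - xstar) = u \<bullet> (y - xstar) + q * (u \<bullet> (y - x0)) + q / L * (u \<bullet> v)"
    by argo
  have "F y + u \<bullet> (xstar - y) + (norm u)\<^sup>2 / (2 * L) \<le> F xstar"
    using convex_smooth_cocoercive[OF F_convex F_has_derivative GF_lipschitz L_pos, of y xstar]
    by (simp add: GF_xstar u_def norm_minus_commute)
  moreover have "(F y - F xstar) / \<tau> = F y - F xstar + q * F y - q * F xstar"
    using \<tau> by (simp add: q_def field_simps)
  moreover have "(1 - \<tau>) / \<tau> * (F x0 - F xstar) = q * F x0 - q * F xstar"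
    by (simp add: q_def right_diff_distrib)
  moreover have "u \<bullet> (xstar - y) = - (u \<bullet> (y - xstar))"
    by (simp add: inner_diff_right)
  ultimately show ?thesis
    using average_distance_after_update[OF \<tau>, of x0 z, folded q_def y_def \<alpha>_def u_def v_def]
      variance momentum
    unfolding u_def by argo
qed

section \<open>Expected accuracy of the output\<close>

lemma svrg_potential_supermartingale:
  fixes \<tau> \<kappa> :: real and x0 z :: 'a and h :: "'a \<Rightarrow> real"
  assumes \<tau>: "0 < \<tau>" "\<tau> < 1" and h_nonneg: "\<And>y. 0 \<le> h y" and \<kappa>: "0 \<le> \<kappa>"
    and h_le: "\<And>y. h y \<le> \<kappa> * ((F y - F xstar) / \<tau> + (norm (GF y))\<^sup>2 / (2 * L))"
  defines "V \<equiv> \<lambda>z. \<kappa> * ((1 - \<tau>) / \<tau> * (F x0 - F xstar)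
      + L * \<tau> / (1 - \<tau>) / 2 * (norm (z - xstar))\<^sup>2 / real n)"
  shows "(\<integral>\<^sup>+ a. (if snd a then ennreal (h (svrg_y n L g \<tau> z x0))
      else ennreal (V (svrg_z_update n L g \<tau> x0 z (fst a)))) \<partial>svrg_pmf n) \<le> ennreal (V z)"
proof -
  define p where "p = 1 / real n"
  define E0 where "E0 = (1 - \<tau>) / \<tau> * (F x0 - F xstar)"
  define D where "D z = L * \<tau> / (1 - \<tau>) / 2 * (norm (z - xstar))\<^sup>2" for z
  define A where "A = p * (\<Sum>i<n. D (svrg_z_update n L g \<tau> x0 z i))"
  define y where "y = svrg_y n L g \<tau> z x0"
  have V: "V z = \<kappa> * (E0 + p * D z)" for z
    by (simp add: V_def E0_def D_def p_def)
  have p: "0 < p" "p \<le> 1"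
    using n_pos by (auto simp: p_def)
  have nonneg: "0 \<le> E0" "0 \<le> D z" for z
    using \<tau> minimizer L_pos by (auto simp: E0_def D_def)
  then have "0 \<le> A"
    using p by (simp add: A_def sum_nonneg)
  have "(F y - F xstar) / \<tau> + (norm (GF y))\<^sup>2 / (2 * L) + A \<le> D z + E0"
    using one_step_estimate[OF \<tau>, of z x0] by (simp add: A_def D_def E0_def y_def p_def)
  then have "p * h y \<le> p * (\<kappa> * (D z + E0 - A))"
    using h_le[of y] p \<kappa> by (intro mult_left_mono) (auto elim!: order_trans intro!: mult_left_mono)
  moreover have "0 \<le> p * p * \<kappa> * A"
    using p \<kappa> \<open>0 \<le> A\<close> by simp
  ultimately have bound: "p * h y + (1 - p) * (\<kappa> * (E0 + p * A)) \<le> \<kappa> * (E0 + p * D z)"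
    by (simp add: algebra_simps)
  have continue: "p * (\<Sum>i<n. V (svrg_z_update n L g \<tau> x0 z i)) = \<kappa> * (E0 + p * A)"
  proof -
    have summand: "V (svrg_z_update n L g \<tau> x0 z i) = \<kappa> * E0 + (\<kappa> * p) * D (svrg_z_update n L g \<tau> x0 z i)"
      for i by (simp add: V algebra_simps)
    show ?thesis
      unfolding summand A_def p_def average_affine[OF n_pos] by (simp add: algebra_simps)
  qed
  have "0 \<le> h (svrg_y n L g \<tau> z x0)" "\<And>i. 0 \<le> V (svrg_z_update n L g \<tau> x0 z i)"
    using h_nonneg nonneg \<kappa> p by (auto simp: V)
  from nn_integral_svrg_pmf[OF n_pos, of "h (svrg_y n L g \<tau> z x0)" "\<lambda>i. V (svrg_z_update n L g \<tau> x0 z i)", OF this]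
  have "(\<integral>\<^sup>+ a. (if snd a then ennreal (h (svrg_y n L g \<tau> z x0))
      else ennreal (V (svrg_z_update n L g \<tau> x0 z (fst a)))) \<partial>svrg_pmf n)
      = ennreal (p * h y + (1 - p) * (\<kappa> * (E0 + p * A)))"
    unfolding continue[symmetric] by (simp add: p_def y_def)
  also have "\<dots> \<le> ennreal (V z)"
    using bound by (simp add: V ennreal_leI)
  finally show ?thesis .
qed

lemma measurable_svrg_z_step: "(\<lambda>z. svrg_z_step n L g \<tau> x0 z i) \<in> borel \<rightarrow>\<^sub>M borel"
proof (cases "i < n")
  case True
  have "continuous_on UNIV (g i)"
    using smooth[OF True] L_pos
    by (intro lipschitz_on_continuous_on[of L] lipschitz_onI) (auto simp: dist_norm)
  moreover have y_cont: "continuous_on UNIV (\<lambda>z. svrg_y n L g \<tau> z x0)"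
    unfolding svrg_y_def by (intro continuous_intros)
  ultimately have "continuous_on UNIV (\<lambda>z. svrg_z_update n L g \<tau> x0 z i)"
    unfolding svrg_z_update_def by (intro continuous_intros continuous_on_compose2[OF _ y_cont]) auto
  with True show ?thesis
    by (simp add: svrg_z_step_def borel_measurable_continuous_onI)
qed (simp add: svrg_z_step_def)

lemma svrg_expected_output_le:
  fixes \<tau> \<kappa> :: real and x0 :: 'a and h :: "'a \<Rightarrow> real"
  assumes \<tau>: "0 < \<tau>" "\<tau> < 1" and h_cont: "continuous_on UNIV h" and h_nonneg: "\<And>y. 0 \<le> h y"
    and \<kappa>: "0 \<le> \<kappa>" and h_le: "\<And>y. h y \<le> \<kappa> * ((F y - F xstar) / \<tau> + (norm (GF y))\<^sup>2 / (2 * L))"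
  shows "(\<integral>\<^sup>+ \<omega>. ennreal (h (svrg_output n L g \<tau> x0 \<omega>)) \<partial>svrg_space n)
    \<le> ennreal (\<kappa> * ((1 - \<tau>) / \<tau> * (F x0 - F xstar)
        + L * \<tau> / (1 - \<tau>) / 2 * (norm (x0 - xstar))\<^sup>2 / real n))"
proof -
  define V where "V z = \<kappa> * ((1 - \<tau>) / \<tau> * (F x0 - F xstar)
      + L * \<tau> / (1 - \<tau>) / 2 * (norm (z - xstar))\<^sup>2 / real n)" for z
  define r where "r z = ennreal (h (svrg_y n L g \<tau> z x0))" for z
  have r_measurable: "r \<in> borel_measurable borel"
    unfolding r_def[abs_def] svrg_y_def
    by (intro measurable_compose[OF _ measurable_ennreal] borel_measurable_continuous_onI
        continuous_on_compose2[OF h_cont] continuous_intros) auto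
  have "(\<integral>\<^sup>+ a. (if snd a then r z else ennreal (V (svrg_z_step n L g \<tau> x0 z (fst a)))) \<partial>svrg_pmf n)
      \<le> ennreal (V z)" for z
  proof -
    from AE_svrg_pmf_index[OF n_pos]
    have "(\<integral>\<^sup>+ a. (if snd a then r z else ennreal (V (svrg_z_step n L g \<tau> x0 z (fst a)))) \<partial>svrg_pmf n)
        = (\<integral>\<^sup>+ a. (if snd a then ennreal (h (svrg_y n L g \<tau> z x0))
            else ennreal (V (svrg_z_update n L g \<tau> x0 z (fst a)))) \<partial>svrg_pmf n)"
      by (intro nn_integral_cong_AE) (auto simp: svrg_z_step_def r_def)
    also have "\<dots> \<le> ennreal (V z)"
      unfolding V_def by (rule svrg_potential_supermartingale[OF \<tau> h_nonneg \<kappa> h_le])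
    finally show ?thesis .
  qed
  then have "(\<integral>\<^sup>+ \<omega>. (if \<exists>k. snd (\<omega> k)
        then r (random_orbit (svrg_z_step n L g \<tau> x0) x0 \<omega> (LEAST k. snd (\<omega> k))) else 0) \<partial>svrg_space n)
      \<le> ennreal (V x0)"
    unfolding svrg_space_eq
    by (intro nn_integral_stopped_orbit_le[OF measurable_svrg_z_step r_measurable]) auto
  moreover have "AE \<omega> in svrg_space n. ennreal (h (svrg_output n L g \<tau> x0 \<omega>))
      = (if \<exists>k. snd (\<omega> k) then r (random_orbit (svrg_z_step n L g \<tau> x0) x0 \<omega> (LEAST k. snd (\<omega> k))) else 0)"
    using AE_svrg_output_eq_orbit[OF n_pos L_pos \<tau>, of g x0]
    by eventually_elim (auto simp: r_def svrg_N_def)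
  then have "(\<integral>\<^sup>+ \<omega>. ennreal (h (svrg_output n L g \<tau> x0 \<omega>)) \<partial>svrg_space n)
      = (\<integral>\<^sup>+ \<omega>. (if \<exists>k. snd (\<omega> k)
        then r (random_orbit (svrg_z_step n L g \<tau> x0) x0 \<omega> (LEAST k. snd (\<omega> k))) else 0) \<partial>svrg_space n)"
    by (rule nn_integral_cong_AE)
  ultimately show ?thesis
    by (simp add: V_def)
qed

lemma norm_GF_square_le_potential:
  assumes \<tau>: "0 < \<tau>"
  shows "(norm (GF y))\<^sup>2 \<le> 2 * L * \<tau> / (1 + \<tau>) * ((F y - F xstar) / \<tau> + (norm (GF y))\<^sup>2 / (2 * L))"
proof -
  define u where "u = (norm (GF y))\<^sup>2"
  define \<kappa> where "\<kappa> = 2 * L * \<tau> / (1 + \<tau>)"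
  have "u / (2 * L) \<le> F y - F xstar"
    using norm_GF_square_le[of y] L_pos by (simp add: u_def field_simps)
  then have "\<kappa> * (u / (2 * L) / \<tau> + u / (2 * L)) \<le> \<kappa> * ((F y - F xstar) / \<tau> + u / (2 * L))"
    using \<tau> L_pos by (intro mult_left_mono add_right_mono divide_right_mono) (auto simp: \<kappa>_def)
  moreover have "\<kappa> * (u / (2 * L) / \<tau> + u / (2 * L)) = u"
    using \<tau> L_pos by (simp add: \<kappa>_def divide_simps) (simp add: algebra_simps)
  ultimately show ?thesis
    by (simp add: u_def \<kappa>_def)
qed

lemma svrg_initial_potential_le:
  assumes init: "norm (x0 - xstar) \<le> R0"
  defines "\<tau> \<equiv> 1 - 1 / sqrt (real n + 1)"
  shows "(1 - \<tau>) / \<tau> * (F x0 - F xstar) + L * \<tau> / (1 - \<tau>) / 2 * (norm (x0 - xstar))\<^sup>2 / real n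
    \<le> L * sqrt (real n + 1) * R0\<^sup>2 / real n"
proof -
  define s where "s = sqrt (real n + 1)"
  define Q where "Q = (norm (x0 - xstar))\<^sup>2"
  have s: "1 < s" and n: "real n = (s - 1) * (s + 1)"
    using n_pos by (auto simp: s_def algebra_simps)
  have \<tau>_s: "\<tau> = 1 - 1 / s"
    by (simp add: \<tau>_def s_def)
  have weight: "(1 - \<tau>) / \<tau> = 1 / (s - 1)" and step: "L * \<tau> / (1 - \<tau>) = L * (s - 1)"
    unfolding \<tau>_s using s by (simp_all add: field_simps)
  have Q: "Q \<le> R0\<^sup>2"
    unfolding Q_def using init by (intro power_mono) auto
  have "F x0 - F xstar \<le> L / 2 * Q"
    using F_gap_le by (simp add: Q_def)
  also have "\<dots> \<le> L / 2 * R0\<^sup>2"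
    using Q L_pos by (intro mult_left_mono) auto
  finally have "(1 - \<tau>) / \<tau> * (F x0 - F xstar) \<le> 1 / (s - 1) * (L / 2 * R0\<^sup>2)"
    unfolding weight using s by (intro mult_left_mono) auto
  moreover have "L * \<tau> / (1 - \<tau>) / 2 * Q / real n \<le> L * (s - 1) / 2 * R0\<^sup>2 / ((s - 1) * (s + 1))"
    unfolding step n using Q s L_pos by (intro divide_right_mono mult_left_mono) auto
  ultimately have "(1 - \<tau>) / \<tau> * (F x0 - F xstar) + L * \<tau> / (1 - \<tau>) / 2 * Q / real n
      \<le> 1 / (s - 1) * (L / 2 * R0\<^sup>2) + L * (s - 1) / 2 * R0\<^sup>2 / ((s - 1) * (s + 1))"
    by (rule add_mono)
  also have "\<dots> = L * s * R0\<^sup>2 / real n"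
  proof -
    have "s - 1 \<noteq> 0" "s + 1 \<noteq> 0"
      using s by auto
    then show ?thesis
      unfolding n by (simp add: divide_simps) (simp add: algebra_simps)
  qed
  finally show ?thesis
    by (simp add: Q_def s_def)
qed

lemma sqrt_n_plus_one:
  defines "s \<equiv> sqrt (real n + 1)"
  shows "1 < s" and "4 / 3 \<le> s" and "real n = (s - 1) * (s + 1)"
    and "1 - 1 / sqrt (real n + 1) = (s - 1) / s"
proof -
  have "s\<^sup>2 = real n + 1"
    by (simp add: s_def)
  show "1 < s"
    unfolding s_def by (rule real_less_rsqrt) (use n_pos in simp)
  show "4 / 3 \<le> s"
    unfolding s_def by (rule real_le_rsqrt) (use n_pos in \<open>simp add: power2_eq_square\<close>)
  then show "real n = (s - 1) * (s + 1)"
    using \<open>s\<^sup>2 = real n + 1\<close> by (simp add: algebra_simps power2_eq_square)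
  show "1 - 1 / sqrt (real n + 1) = (s - 1) / s"
    unfolding s_def[symmetric] using \<open>1 < s\<close> by (simp add: field_simps)
qed

lemma svrg_expected_gap:
  assumes init: "norm (x0 - xstar) \<le> R0"
  defines "\<tau> \<equiv> 1 - 1 / sqrt (real n + 1)"
  shows "(\<integral>\<^sup>+ \<omega>. ennreal (F (svrg_output n L g \<tau> x0 \<omega>) - F xstar) \<partial>svrg_space n)
    \<le> ennreal (L * R0\<^sup>2 / (sqrt (real n + 1) + 1))"
proof -
  define s where "s = sqrt (real n + 1)"
  note s = sqrt_n_plus_one[folded s_def]
  have \<tau>: "0 < \<tau>" "\<tau> < 1"
    using s(1) n_pos by (auto simp: \<tau>_def s(4) field_simps)
  have "(\<integral>\<^sup>+ \<omega>. ennreal (F (svrg_output n L g \<tau> x0 \<omega>) - F xstar) \<partial>svrg_space n)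
      \<le> ennreal (\<tau> * ((1 - \<tau>) / \<tau> * (F x0 - F xstar)
          + L * \<tau> / (1 - \<tau>) / 2 * (norm (x0 - xstar))\<^sup>2 / real n))"
  proof (rule svrg_expected_output_le[OF \<tau>])
    show "continuous_on UNIV (\<lambda>y. F y - F xstar)"
      by (intro continuous_intros F_continuous)
    show "(F y - F xstar) \<le> \<tau> * ((F y - F xstar) / \<tau> + (norm (GF y))\<^sup>2 / (2 * L))" for y
      using \<tau> L_pos by (simp add: distrib_left)
  qed (use \<tau> minimizer in auto)
  also have "\<dots> \<le> ennreal (\<tau> * (L * s * R0\<^sup>2 / real n))"
    using svrg_initial_potential_le[OF init] \<tau> by (intro ennreal_leI mult_left_mono) (auto simp: \<tau>_def s_def)
  also have "\<tau> * (L * s * R0\<^sup>2 / real n) = L * R0\<^sup>2 / (s + 1)"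
  proof -
    have "0 < s" "s - 1 \<noteq> 0" "s + 1 \<noteq> 0"
      using s(1) by auto
    then show ?thesis
      by (simp add: \<tau>_def s(3,4) divide_simps) (simp add: algebra_simps)
  qed
  finally show ?thesis
    by (simp add: s_def)
qed

lemma svrg_expected_grad_norm:
  assumes init: "norm (x0 - xstar) \<le> R0"
  defines "\<tau> \<equiv> 1 - 1 / sqrt (real n + 1)"
  shows "(\<integral>\<^sup>+ \<omega>. ennreal ((norm (GF (svrg_output n L g \<tau> x0 \<omega>)))\<^sup>2) \<partial>svrg_space n)
    \<le> ennreal (8 * L\<^sup>2 * R0\<^sup>2 / (5 * (sqrt (real n + 1) + 1)))"
proof -
  define s where "s = sqrt (real n + 1)"
  note s = sqrt_n_plus_one[folded s_def]
  define \<kappa> where "\<kappa> = 2 * L * \<tau> / (1 + \<tau>)"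
  have \<tau>: "0 < \<tau>" "\<tau> < 1"
    using s(1) n_pos by (auto simp: \<tau>_def s(4) field_simps)
  have \<kappa>: "0 \<le> \<kappa>"
    using \<tau> L_pos by (simp add: \<kappa>_def)
  have "(\<integral>\<^sup>+ \<omega>. ennreal ((norm (GF (svrg_output n L g \<tau> x0 \<omega>)))\<^sup>2) \<partial>svrg_space n)
      \<le> ennreal (\<kappa> * ((1 - \<tau>) / \<tau> * (F x0 - F xstar)
          + L * \<tau> / (1 - \<tau>) / 2 * (norm (x0 - xstar))\<^sup>2 / real n))"
  proof (rule svrg_expected_output_le[OF \<tau>])
    show "continuous_on UNIV (\<lambda>y. (norm (GF y))\<^sup>2)"
      by (intro continuous_intros GF_continuous)
    show "(norm (GF y))\<^sup>2 \<le> \<kappa> * ((F y - F xstar) / \<tau> + (norm (GF y))\<^sup>2 / (2 * L))" for y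
      unfolding \<kappa>_def using \<tau>(1) by (rule norm_GF_square_le_potential)
  qed (use \<kappa> in auto)
  also have "\<dots> \<le> ennreal (\<kappa> * (L * s * R0\<^sup>2 / real n))"
    using svrg_initial_potential_le[OF init] \<kappa> by (intro ennreal_leI mult_left_mono) (auto simp: \<tau>_def s_def)
  also have "\<dots> \<le> ennreal (8 * L\<^sup>2 * R0\<^sup>2 / (5 * (s + 1)))"
  proof (rule ennreal_leI)
    have "0 < s" "s - 1 \<noteq> 0" "s + 1 \<noteq> 0" "2 * s - 1 \<noteq> 0"
      using s(1) by auto
    then have "\<kappa> * (L * s * R0\<^sup>2 / real n) = 2 * s / (2 * s - 1) * (L\<^sup>2 * R0\<^sup>2 / (s + 1))"
      by (simp add: \<kappa>_def \<tau>_def s(3,4) divide_simps) (simp add: algebra_simps power2_eq_square)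
    also have "\<dots> \<le> 8 / 5 * (L\<^sup>2 * R0\<^sup>2 / (s + 1))"
      using s(1,2) by (intro mult_right_mono) (auto simp: field_simps)
    finally show "\<kappa> * (L * s * R0\<^sup>2 / real n) \<le> 8 * L\<^sup>2 * R0\<^sup>2 / (5 * (s + 1))"
      by simp
  qed
  finally show ?thesis
    by (simp add: s_def)
qed

end

theorem theorem5:
  fixes f :: "nat \<Rightarrow> 'a::euclidean_space \<Rightarrow> real"
    and g :: "nat \<Rightarrow> 'a \<Rightarrow> 'a"
    and n :: nat and L R0 :: real and x0 xstar :: 'a
  assumes n_pos: "n \<ge> 1"
    and L_pos: "L > 0"
    and convex: "\<forall>i<n. convex_on UNIV (f i)"
    and gradient: "\<forall>i<n. \<forall>x. (f i has_derivative (\<lambda>h. g i x \<bullet> h)) (at x)"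
    and smooth: "\<forall>i<n. \<forall>x y. norm (g i x - g i y) \<le> L * norm (x - y)"
    and minimizer: "\<forall>x. favg n f xstar \<le> favg n f x"
    and init: "norm (x0 - xstar) \<le> R0"
  shows "(\<integral>\<^sup>+ \<omega>. ennreal ((norm (grad_avg n g
              (svrg_output n L g (1 - 1 / sqrt (real n + 1)) x0 \<omega>)))\<^sup>2) \<partial>svrg_space n)
           \<le> ennreal (8 * L\<^sup>2 * R0\<^sup>2 / (5 * (sqrt (real n + 1) + 1)))
       \<and> (\<integral>\<^sup>+ \<omega>. ennreal (favg n f (svrg_output n L g (1 - 1 / sqrt (real n + 1)) x0 \<omega>)
              - favg n f xstar) \<partial>svrg_space n)
           \<le> ennreal (L * R0\<^sup>2 / (sqrt (real n + 1) + 1))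
       \<and> (\<integral>\<^sup>+ \<omega>. ennreal (real n + 2 * (real (svrg_N \<omega>) + 1)) \<partial>svrg_space n)
           \<le> ennreal (3 * real n)"
proof -
  interpret svrg_problem f g n L xstar
    using assms by unfold_locales auto
  show ?thesis
    using svrg_expected_grad_norm[OF init] svrg_expected_gap[OF init]
      svrg_expected_oracle_calls n_pos by simp
qed

end
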